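(* Let $\lambda>0$ and let $R,B\subset\mathbb{R}^d$ with $B=\overline{B\cap(\tfrac12+\mathbb{Z})^d}$. Let $K$ be a random subset of $(\tfrac12+\mathbb{Z})^d\cap B$, independent of $\mathcal{H}_\lambda$ (and of the edge randomness), such that $R^+_B\cap\overline{K}=\emptyset$ almost surely. Define the random set $$U:=\{z\in\Delta(R;B):\ \overline{\{z\}}\leftrightarrow\overline{K}\ \text{in}\ G(\mathcal{H}_\lambda\cap B\setminus\overline{R})\}.$$ Then for each $t\in\mathbb{N}$, $$\mathbb{P}[\#U\leq t]\leq e^{3^d\lambda t}\,\mathbb{P}\big[\{\overline{R}\leftrightarrow\overline{K}\ \text{in}\ G(\mathcal{H}_\lambda\cap B)\}^c\big].$$
   Context: Standing assumptions: $d\geq3$; $\|\cdot\|$ is an $\ell^p$ norm on $\mathbb{R}^d$ for some $p\in[1,\infty]$; $\phi:[0,\infty)\to[0,1]$ is nonincreasing with $\sup\{r>0:\phi(r)>0\}=1$. For locally finite $\mathcal{X}\subset\mathbb{R}^d$, $G(\mathcal{X})$ is the random graph on vertex set $\mathcal{X}$ in which each pair $\{x,y\}$ is joined independently with probability $\phi(\|y-x\|)$. $\mathcal{H}_\lambda$ is a homogeneous Poisson point process of intensity $\lambda$ in $\mathbb{R}^d$. $\Lambda_s(x):=x+[-s,s]^d$. For $A,A'\subset\mathbb{R}^d$, $\{A\leftrightarrow A'\text{ in }G(\mathcal{X})\}$ is the event that some $x\in\mathcal{X}\cap A$ and some $y\in\mathcal{X}\cap A'$ are joined by a path in $G(\mathcal{X})$.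 $\#A$ is the cardinality of a finite set $A$. For $\eta\subset\mathbb{R}^d$, $\overline{\eta}:=\bigcup\{\Lambda_{1/2}(z): z\in(\tfrac12+\mathbb{Z})^d,\ \Lambda_{1/2}(z)\cap\eta\neq\emptyset\}$ (the union of unit cubes centred at points of $(\tfrac12+\mathbb{Z})^d$ that meet $\eta$). For such $B$ and $\eta\subset\mathbb{R}^d$, $$\Delta(\eta;B):=\{z\in(\tfrac12+\mathbb{Z})^d\cap B\setminus\overline{\eta}:\ \Lambda_{1/2}(z)\cap\overline{\eta\cap B}\neq\emptyset\},\qquad \eta^+_B:=(\eta\cap B)\cup\Delta(\eta;B).$$ *)

theory Defs
  imports "HOL-Analysis.Analysis" "HOL-Probability.Probability"
begin

text \<open>Points of R^d are vectors of type real^'n, d = CARD('n).\<close>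

definition lp_norm :: "ereal \<Rightarrow> real^'n \<Rightarrow> real" where
  "lp_norm p x = (if p = \<infinity> then Max (range (\<lambda>i. \<bar>x $ i\<bar>))
                  else (\<Sum>i\<in>UNIV. \<bar>x $ i\<bar> powr real_of_ereal p) powr (1 / real_of_ereal p))"

definition halfint :: "(real^'n) set" where
  "halfint = {z. \<forall>i. z $ i - 1/2 \<in> \<int>}"

definition Lam :: "real \<Rightarrow> real^'n \<Rightarrow> (real^'n) set" where
  "Lam s x = {y. \<forall>i. x $ i - s \<le> y $ i \<and> y $ i \<le> x $ i + s}"

definition cubify :: "(real^'n) set \<Rightarrow> (real^'n) set" where
  "cubify \<eta> = \<Union>{Lam (1/2) z | z. z \<in> halfint \<and> Lam (1/2) z \<inter> \<eta> \<noteq> {}}"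

definition Delta :: "(real^'n) set \<Rightarrow> (real^'n) set \<Rightarrow> (real^'n) set" where
  "Delta \<eta> B = {z \<in> halfint \<inter> B - cubify \<eta>. Lam (1/2) z \<inter> cubify (\<eta> \<inter> B) \<noteq> {}}"

definition plusB :: "(real^'n) set \<Rightarrow> (real^'n) set \<Rightarrow> (real^'n) set" where
  "plusB \<eta> B = (\<eta> \<inter> B) \<union> Delta \<eta> B"

text \<open>Labels of potential Poisson points: (k,i) = i-th point of the unit cube with corner k in Z^d.\<close>
type_synonym 'n lab = "(int^'n) \<times> nat"

definition unit_cube :: "int^'n \<Rightarrow> (real^'n) set" where
  "unit_cube k = cbox (\<chi> i. real_of_int (k $ i)) (\<chi> i. real_of_int (k $ i) + 1)"

definition count_law :: "real \<Rightarrow> (int^'n \<Rightarrow> nat) measure" where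
  "count_law lam = (\<Pi>\<^sub>M k\<in>UNIV. measure_pmf (poisson_pmf lam))"

definition pos_law :: "('n lab \<Rightarrow> real^'n) measure" where
  "pos_law = (\<Pi>\<^sub>M a\<in>UNIV. uniform_measure lborel (unit_cube (fst a)))"

definition edge_law :: "('n lab set \<Rightarrow> real) measure" where
  "edge_law = (\<Pi>\<^sub>M e\<in>{S. card S = 2}. uniform_measure lborel {0..1::real})"

definition rcm_law :: "real \<Rightarrow> ((int^'n \<Rightarrow> nat) \<times> ('n lab \<Rightarrow> real^'n) \<times> ('n lab set \<Rightarrow> real)) measure" where
  "rcm_law lam = count_law lam \<Otimes>\<^sub>M (pos_law \<Otimes>\<^sub>M edge_law)"

definition alive :: "(int^'n \<Rightarrow> nat) \<Rightarrow> 'n lab \<Rightarrow> bool" where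
  "alive n a \<longleftrightarrow> snd a < n (fst a)"

definition PPP :: "(int^'n \<Rightarrow> nat) \<Rightarrow> ('n lab \<Rightarrow> real^'n) \<Rightarrow> (real^'n) set" where
  "PPP n y = {y a | a. alive n a}"

definition rcm_edges :: "ereal \<Rightarrow> (real \<Rightarrow> real) \<Rightarrow> (int^'n \<Rightarrow> nat) \<times> ('n lab \<Rightarrow> real^'n) \<times> ('n lab set \<Rightarrow> real)
    \<Rightarrow> (real^'n) set \<Rightarrow> ('n lab \<times> 'n lab) set" where
  "rcm_edges p \<phi> \<omega> S = (case \<omega> of (n, y, v) \<Rightarrow>
     {(a, b). alive n a \<and> alive n b \<and> y a \<in> S \<and> y b \<in> S \<and> a \<noteq> b \<and>
              v {a, b} < \<phi> (lp_norm p (y b - y a))})"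

definition conn_in :: "ereal \<Rightarrow> (real \<Rightarrow> real) \<Rightarrow> (int^'n \<Rightarrow> nat) \<times> ('n lab \<Rightarrow> real^'n) \<times> ('n lab set \<Rightarrow> real)
    \<Rightarrow> (real^'n) set \<Rightarrow> (real^'n) set \<Rightarrow> (real^'n) set \<Rightarrow> bool" where
  "conn_in p \<phi> \<omega> S A A' = (case \<omega> of (n, y, v) \<Rightarrow>
     (\<exists>a b. alive n a \<and> alive n b \<and> y a \<in> S \<inter> A \<and> y b \<in> S \<inter> A' \<and>
            (a, b) \<in> (rcm_edges p \<phi> \<omega> S)\<^sup>*))"

end

theory Submission
  imports Defs
begin

(* Fix the marks, the positions of the potential points and the edge variables, and resample only
   the Poisson counts of the unit cells inside the cubes of R.  The set U does not depend on these
   counts, because its connections avoid the cubes of R.  Edges have length at most 1, so a path from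
   R to K leaves the cubes of R by an edge from a cell inside them to a neighbouring cell whose
   centre lies in U; hence R and K are disconnected as soon as the at most 3^d #U cells inside the
   cubes of R that touch a cube of U are empty.  Given the rest, this happens with probability at
   least exp(-lam 3^d #U), and averaging over the rest gives the bound. *)

section \<open>Lattice cells\<close>

definition cell_center :: "int^'n \<Rightarrow> real^'n" where
  "cell_center k = (\<chi> i. real_of_int (k $ i) + 1/2)"

definition open_cell :: "int^'n \<Rightarrow> (real^'n) set" where
  "open_cell k = box (\<chi> i. real_of_int (k $ i)) (\<chi> i. real_of_int (k $ i) + 1)"

lemma halfint_eq_range_cell_center: "halfint = range cell_center"
proof (intro equalityI subsetI)
  fix z :: "real^'n" assume "z \<in> halfint"
  then have "\<forall>i. \<exists>m::int. z $ i - 1/2 = of_int m" by (auto simp: halfint_def Ints_def)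
  then obtain f where f: "\<And>i. z $ i - 1/2 = of_int (f i)" by metis
  have "z = cell_center (\<chi> i. f i)" by (auto simp: cell_center_def vec_eq_iff f[symmetric])
  then show "z \<in> range cell_center" by blast
qed (auto simp: halfint_def cell_center_def)

lemma cell_center_in_halfint [simp]: "cell_center k \<in> halfint"
  by (simp add: halfint_eq_range_cell_center)

lemma inj_cell_center: "inj cell_center"
  by (auto simp: inj_def cell_center_def vec_eq_iff)

lemma countable_halfint: "countable (halfint :: (real^'n) set)"
  by (simp add: halfint_eq_range_cell_center)

lemma unit_cube_eq_Lam: "unit_cube k = Lam (1/2) (cell_center k)"
  by (auto simp: unit_cube_def Lam_def cell_center_def mem_box_cart algebra_simps)

lemma open_cell_subset_unit_cube: "open_cell k \<subseteq> unit_cube k"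
  by (auto simp: open_cell_def unit_cube_def mem_box_cart less_imp_le)

lemma cell_center_in_open_cell: "cell_center k \<in> open_cell k"
  by (auto simp: open_cell_def cell_center_def mem_box_cart)

lemma cell_center_in_unit_cube: "cell_center k \<in> unit_cube k"
  using cell_center_in_open_cell open_cell_subset_unit_cube by blast

lemma sets_open_cell [measurable]: "open_cell k \<in> sets borel"
  by (simp add: open_cell_def borel_open)

lemma halfint_eq_if_in_Lam:
  assumes "z \<in> halfint" "z' \<in> halfint" "z' \<in> Lam (1/2) z"
  shows "z' = z"
proof (subst vec_eq_iff, intro allI)
  fix i
  have "z' $ i - 1/2 \<in> \<int>" "z $ i - 1/2 \<in> \<int>" using assms(1,2) by (auto simp: halfint_def)
  from Ints_diff[OF this] obtain m :: int where m: "z' $ i - z $ i = of_int m"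
    by (auto elim: Ints_cases)
  have "z $ i - 1/2 \<le> z' $ i \<and> z' $ i \<le> z $ i + 1/2" using assms(3) by (simp add: Lam_def)
  then have "\<bar>z' $ i - z $ i\<bar> \<le> 1/2" unfolding abs_le_iff by linarith
  with m have "m = 0" by linarith
  with m show "z' $ i = z $ i" by simp
qed

lemma cell_center_eq_if_in_Lam:
  assumes "x \<in> open_cell k" "z \<in> halfint" "x \<in> Lam (1/2) z"
  shows "z = cell_center k"
proof -
  obtain m where m: "z = cell_center m" using assms(2) halfint_eq_range_cell_center by blast
  have "m $ i = k $ i" for i
  proof -
    have "real_of_int (k $ i) < x $ i" "x $ i < real_of_int (k $ i) + 1"
      using assms(1) by (auto simp: open_cell_def mem_box_cart)
    moreover have "real_of_int (m $ i) \<le> x $ i" "x $ i \<le> real_of_int (m $ i) + 1"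
      using assms(3) by (auto simp: Lam_def m cell_center_def algebra_simps)
    ultimately show ?thesis by linarith
  qed
  then show ?thesis by (simp add: m vec_eq_iff cell_center_def)
qed

lemma unit_cubes_meet_iff:
  "unit_cube k \<inter> unit_cube m \<noteq> {} \<longleftrightarrow> (\<forall>i. \<bar>k $ i - m $ i\<bar> \<le> 1)"
proof
  assume "unit_cube k \<inter> unit_cube m \<noteq> {}"
  then obtain w where "w \<in> unit_cube k" "w \<in> unit_cube m" by blast
  then have "real_of_int (k $ i) \<le> w $ i \<and> w $ i \<le> real_of_int (k $ i) + 1 \<and>
             real_of_int (m $ i) \<le> w $ i \<and> w $ i \<le> real_of_int (m $ i) + 1" for i
    by (auto simp: unit_cube_def mem_box_cart)
  note w = this
  have "\<bar>k $ i - m $ i\<bar> \<le> 1" for i using w[of i] unfolding abs_le_iff by linarith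
  then show "\<forall>i. \<bar>k $ i - m $ i\<bar> \<le> 1" by blast
next
  assume d: "\<forall>i. \<bar>k $ i - m $ i\<bar> \<le> 1"
  have b: "real_of_int (k $ i) \<le> real_of_int (m $ i) + 1 \<and> real_of_int (m $ i) \<le> real_of_int (k $ i) + 1" for i
    using d[rule_format, of i] unfolding abs_le_iff by linarith
  have "(\<chi> i. max (real_of_int (k $ i)) (real_of_int (m $ i))) \<in> unit_cube k \<inter> unit_cube m"
    by (simp add: unit_cube_def mem_box_cart le_max_iff_disj b)
  then show "unit_cube k \<inter> unit_cube m \<noteq> {}" by blast
qed

lemma finite_card_neighbour_cells:
  "finite {k. unit_cube k \<inter> unit_cube m \<noteq> {}} \<and>
   card {k. unit_cube k \<inter> unit_cube (m :: int^'n) \<noteq> {}} \<le> 3 ^ CARD('n)"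
proof -
  let ?F = "PiE (UNIV :: 'n set) (\<lambda>_. {-1, 0, 1 :: int})"
  let ?g = "\<lambda>f. \<chi> i. m $ i + f i"
  have sub: "{k. unit_cube k \<inter> unit_cube m \<noteq> {}} \<subseteq> ?g ` ?F"
  proof
    fix k assume "k \<in> {k. unit_cube k \<inter> unit_cube m \<noteq> {}}"
    then have d: "\<bar>k $ i - m $ i\<bar> \<le> 1" for i by (simp add: unit_cubes_meet_iff)
    have "k $ i - m $ i \<in> {-1, 0, 1}" for i
      using d[of i] by (simp only: insert_iff empty_iff) presburger
    then have "restrict (\<lambda>i. k $ i - m $ i) UNIV \<in> ?F" by (simp add: PiE_iff)
    moreover have "k = ?g (restrict (\<lambda>i. k $ i - m $ i) UNIV)" by (simp add: vec_eq_iff)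
    ultimately show "k \<in> ?g ` ?F" by blast
  qed
  have "finite ?F" by (intro finite_PiE) auto
  then have fin: "finite (?g ` ?F)" by (rule finite_imageI)
  have "card (?g ` ?F) \<le> 3 ^ CARD('n)"
    using card_image_le[OF \<open>finite ?F\<close>, of ?g] by (simp add: card_PiE numeral_3_eq_3)
  moreover have "card {k. unit_cube k \<inter> unit_cube m \<noteq> {}} \<le> card (?g ` ?F)"
    by (rule card_mono[OF fin sub])
  ultimately show ?thesis using finite_subset[OF sub fin] by simp
qed

lemma unit_cubes_meet_if_close:
  assumes "x \<in> open_cell k" "x' \<in> open_cell k'" "\<And>i. \<bar>(x' - x) $ i\<bar> \<le> 1"
  shows "unit_cube k \<inter> unit_cube k' \<noteq> {}"
  unfolding unit_cubes_meet_iff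
proof
  fix i
  have "real_of_int (k $ i) < x $ i" "x $ i < real_of_int (k $ i) + 1"
       "real_of_int (k' $ i) < x' $ i" "x' $ i < real_of_int (k' $ i) + 1"
    using assms(1,2) by (auto simp: open_cell_def mem_box_cart)
  moreover have "\<bar>x' $ i - x $ i\<bar> \<le> 1" using assms(3)[of i] by simp
  ultimately have "real_of_int (k $ i) < real_of_int (k' $ i) + 2" "real_of_int (k' $ i) < real_of_int (k $ i) + 2"
    by (auto simp: abs_le_iff)
  then have "k $ i < k' $ i + 2" "k' $ i < k $ i + 2" by linarith+
  then show "\<bar>k $ i - k' $ i\<bar> \<le> 1" by linarith
qed

lemma cubify_eq_UN_unit_cube: "cubify \<eta> = (\<Union>k\<in>{k. unit_cube k \<inter> \<eta> \<noteq> {}}. unit_cube k)"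
  unfolding cubify_def halfint_eq_range_cell_center unit_cube_eq_Lam by blast

lemma sets_cubify [measurable]: "cubify \<eta> \<in> sets borel"
  unfolding cubify_eq_UN_unit_cube unit_cube_def by (intro sets.countable_UN'') (auto simp: borel_closed)

lemma cubify_halfint:
  assumes "K \<subseteq> halfint"
  shows "cubify K = (\<Union>k\<in>{k. cell_center k \<in> K}. unit_cube k)"
proof -
  have "unit_cube k \<inter> K \<noteq> {} \<longleftrightarrow> cell_center k \<in> K" for k
  proof
    assume "unit_cube k \<inter> K \<noteq> {}"
    then obtain z where "z \<in> K" "z \<in> Lam (1/2) (cell_center k)" by (auto simp: unit_cube_eq_Lam)
    moreover have "z = cell_center k"
      using halfint_eq_if_in_Lam[OF cell_center_in_halfint] calculation assms by blast
    ultimately show "cell_center k \<in> K" by simp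
  qed (use cell_center_in_unit_cube in blast)
  then show ?thesis unfolding cubify_eq_UN_unit_cube by simp
qed

lemma unit_cube_subset_cubify: "unit_cube k \<inter> \<eta> \<noteq> {} \<Longrightarrow> unit_cube k \<subseteq> cubify \<eta>"
  unfolding cubify_eq_UN_unit_cube by blast

lemma mem_cubify_open_cell:
  assumes "x \<in> open_cell k"
  shows "x \<in> cubify \<eta> \<longleftrightarrow> unit_cube k \<inter> \<eta> \<noteq> {}"
proof
  assume "x \<in> cubify \<eta>"
  then obtain k' where k': "unit_cube k' \<inter> \<eta> \<noteq> {}" "x \<in> Lam (1/2) (cell_center k')"
    unfolding cubify_eq_UN_unit_cube unit_cube_eq_Lam by blast
  have "cell_center k' = cell_center k"
    by (rule cell_center_eq_if_in_Lam[OF assms cell_center_in_halfint k'(2)])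
  then have "k' = k" using inj_cell_center by (auto dest: injD)
  with k'(1) show "unit_cube k \<inter> \<eta> \<noteq> {}" by simp
next
  assume "unit_cube k \<inter> \<eta> \<noteq> {}"
  then show "x \<in> cubify \<eta>"
    using unit_cube_subset_cubify assms open_cell_subset_unit_cube by blast
qed

lemma unit_cube_subset_cubified:
  assumes B: "B = cubify (B \<inter> halfint)" and x: "x \<in> open_cell k" "x \<in> B"
  shows "cell_center k \<in> B" "unit_cube k \<subseteq> B"
proof -
  have "x \<in> cubify (B \<inter> halfint)" using x(2) by (subst (asm) B)
  then obtain z where z: "z \<in> B" "z \<in> halfint" "z \<in> Lam (1/2) (cell_center k)"
    unfolding mem_cubify_open_cell[OF x(1)] unit_cube_eq_Lam by blast
  moreover have "z = cell_center k" by (rule halfint_eq_if_in_Lam[OF cell_center_in_halfint z(2,3)])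
  ultimately show center: "cell_center k \<in> B" by simp
  have "unit_cube k \<subseteq> cubify (B \<inter> halfint)"
    using center cell_center_in_unit_cube cell_center_in_halfint by (intro unit_cube_subset_cubify) blast
  then show "unit_cube k \<subseteq> B" by (simp only: B[symmetric])
qed

section \<open>Edges join neighbouring cells\<close>

lemma lp_norm_ge_component:
  assumes "1 \<le> p"
  shows "\<bar>x $ i\<bar> \<le> lp_norm p x"
proof (cases "p = \<infinity>")
  case True
  then show ?thesis by (simp add: lp_norm_def)
next
  case False
  with assms obtain r where r: "p = ereal r" "1 \<le> r" by (cases p) auto
  have "\<bar>x $ i\<bar> = (\<bar>x $ i\<bar> powr r) powr (1/r)" using r by (simp add: powr_powr)
  also have "\<dots> \<le> (\<Sum>j\<in>UNIV. \<bar>x $ j\<bar> powr r) powr (1/r)"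
    using r by (intro powr_mono2 member_le_sum) auto
  finally show ?thesis using r False by (simp add: lp_norm_def)
qed

lemma lp_norm_nonneg: "1 \<le> p \<Longrightarrow> 0 \<le> lp_norm p x"
  using lp_norm_ge_component[of p x undefined] by linarith

lemma le_1_if_phi_pos:
  fixes \<phi> :: "real \<Rightarrow> real"
  assumes phi_sup: "{r. r > 0 \<and> \<phi> r > 0} \<noteq> {} \<and> bdd_above {r. r > 0 \<and> \<phi> r > 0}
                  \<and> Sup {r. r > 0 \<and> \<phi> r > 0} = 1"
    and pos: "0 < \<phi> r"
  shows "r \<le> 1"
proof (rule ccontr)
  assume "\<not> r \<le> 1"
  with pos have "r \<le> Sup {r. r > 0 \<and> \<phi> r > 0}" using phi_sup by (intro cSup_upper) auto
  with phi_sup \<open>\<not> r \<le> 1\<close> show False by simp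
qed

lemma rcm_edge_cells_meet:
  fixes \<phi> :: "real \<Rightarrow> real"
  assumes phi_sup: "{r. r > 0 \<and> \<phi> r > 0} \<noteq> {} \<and> bdd_above {r. r > 0 \<and> \<phi> r > 0}
                  \<and> Sup {r. r > 0 \<and> \<phi> r > 0} = 1"
    and p1: "1 \<le> p"
    and y: "\<And>a. y a \<in> open_cell (fst a)" and v: "\<And>a b. a \<noteq> b \<Longrightarrow> 0 \<le> v {a, b}"
    and ab: "(a, b) \<in> rcm_edges p \<phi> (n, y, v) S"
  shows "unit_cube (fst a) \<inter> unit_cube (fst b) \<noteq> {}"
proof (rule unit_cubes_meet_if_close[OF y y])
  fix i
  from ab have "a \<noteq> b" "v {a, b} < \<phi> (lp_norm p (y b - y a))" by (auto simp: rcm_edges_def)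
  with v have "0 < \<phi> (lp_norm p (y b - y a))" by (meson le_less_trans)
  then have "lp_norm p (y b - y a) \<le> 1" by (rule le_1_if_phi_pos[OF phi_sup])
  then show "\<bar>(y b - y a) $ i\<bar> \<le> 1" using lp_norm_ge_component[OF p1, of "y b - y a" i] by linarith
qed

section \<open>Vacant cells block every connection\<close>

lemma rtrancl_last_exit:
  assumes "(x, e) \<in> E\<^sup>*" "\<not> P e"
  shows "(\<not> P x \<and> (x, e) \<in> (Restr E {a. \<not> P a})\<^sup>*) \<or>
         (\<exists>a b. P a \<and> (a, b) \<in> E \<and> \<not> P b \<and> (b, e) \<in> (Restr E {a. \<not> P a})\<^sup>*)"
  using assms(1)
proof (induction rule: converse_rtrancl_induct)
  case base
  then show ?case using assms(2) by simp
next
  case (step y z)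
  show ?case
  proof (cases "P y")
    case True
    with step show ?thesis by blast
  next
    case False
    from step.IH show ?thesis
    proof
      assume "\<not> P z \<and> (z, e) \<in> (Restr E {a. \<not> P a})\<^sup>*"
      then have "(y, e) \<in> (Restr E {a. \<not> P a})\<^sup>*"
        using step.hyps(1) False by (auto intro: converse_rtrancl_into_rtrancl)
      then show ?thesis using False by blast
    qed blast
  qed
qed

lemma rcm_edges_Diff:
  "Restr (rcm_edges p \<phi> (n, y, v) S) {a. y a \<notin> T} = rcm_edges p \<phi> (n, y, v) (S - T)"
  by (auto simp: rcm_edges_def)

lemma not_in_cubify_if_separated:
  assumes B: "B = cubify (B \<inter> halfint)" and sep: "plusB R B \<inter> cubify K = {}"
    and x: "x \<in> open_cell k" "x \<in> B" "x \<in> cubify K"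
  shows "x \<notin> cubify R"
proof
  assume "x \<in> cubify R"
  then obtain r where r: "r \<in> R" "r \<in> unit_cube k" using mem_cubify_open_cell[OF x(1)] by blast
  have "unit_cube k \<subseteq> cubify K" using x(3) mem_cubify_open_cell[OF x(1)] unit_cube_subset_cubify by blast
  moreover have "unit_cube k \<subseteq> B" using unit_cube_subset_cubified[OF B x(1,2)] by blast
  ultimately show False using r sep by (auto simp: plusB_def)
qed

lemma cell_center_in_Delta:
  assumes B: "B = cubify (B \<inter> halfint)"
    and x: "x \<in> open_cell k" "x \<in> B" "x \<in> cubify R"
    and x': "x' \<in> open_cell k'" "x' \<in> B" "x' \<notin> cubify R"
    and meet: "unit_cube k \<inter> unit_cube k' \<noteq> {}"
  shows "cell_center k' \<in> Delta R B"
proof -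
  have "unit_cube k \<inter> R \<noteq> {}" using x(3) mem_cubify_open_cell[OF x(1)] by blast
  with unit_cube_subset_cubified(2)[OF B x(1,2)] have "unit_cube k \<inter> (R \<inter> B) \<noteq> {}"
    by blast
  then have "unit_cube k \<subseteq> cubify (R \<inter> B)" by (rule unit_cube_subset_cubify)
  with meet have "Lam (1/2) (cell_center k') \<inter> cubify (R \<inter> B) \<noteq> {}"
    unfolding unit_cube_eq_Lam by blast
  moreover have "cell_center k' \<notin> cubify R"
    using x'(3) mem_cubify_open_cell[OF x'(1)] mem_cubify_open_cell[OF cell_center_in_open_cell] by blast
  ultimately show ?thesis
    using unit_cube_subset_cubified(1)[OF B x'(1,2)] by (simp add: Delta_def)
qed

definition in_open_cells :: "('n lab \<Rightarrow> real^'n) \<Rightarrow> bool" where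
  "in_open_cells y \<longleftrightarrow> (\<forall>a. y a \<in> open_cell (fst a))"

definition nonneg_on_pairs :: "('a set \<Rightarrow> real) \<Rightarrow> bool" where
  "nonneg_on_pairs v \<longleftrightarrow> (\<forall>a b. a \<noteq> b \<longrightarrow> 0 \<le> v {a, b})"

text \<open>For the marked sites K, \<^term>\<open>linked_sites p \<phi> R B K \<omega>\<close> is the set U of the lemma.\<close>

definition linked_sites :: "ereal \<Rightarrow> (real \<Rightarrow> real) \<Rightarrow> (real^'n) set \<Rightarrow> (real^'n) set \<Rightarrow> (real^'n) set \<Rightarrow>
    (int^'n \<Rightarrow> nat) \<times> ('n lab \<Rightarrow> real^'n) \<times> ('n lab set \<Rightarrow> real) \<Rightarrow> (real^'n) set" where
  "linked_sites p \<phi> R B K \<omega> = {z \<in> Delta R B. conn_in p \<phi> \<omega> (B - cubify R) (cubify {z}) (cubify K)}"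

definition shield_cells :: "(real^'n) set \<Rightarrow> (real^'n) set \<Rightarrow> (int^'n) set" where
  "shield_cells R U =
     {k. unit_cube k \<subseteq> cubify R \<and> (\<exists>k'. cell_center k' \<in> U \<and> unit_cube k \<inter> unit_cube k' \<noteq> {})}"

lemma conn_in_exit_edge:
  assumes conn: "conn_in p \<phi> (n, y, v) S T A'" and outside: "\<And>e. y e \<in> S \<inter> A' \<Longrightarrow> y e \<notin> T"
  obtains a b where "y a \<in> T" "(a, b) \<in> rcm_edges p \<phi> (n, y, v) S" "y b \<notin> T"
    "\<forall>A. y b \<in> A \<longrightarrow> conn_in p \<phi> (n, y, v) (S - T) A A'"
proof -
  let ?E = "rcm_edges p \<phi> (n, y, v) S"
  from conn obtain a0 e where a0: "y a0 \<in> T" and e: "alive n e" "y e \<in> S \<inter> A'"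
    and path: "(a0, e) \<in> ?E\<^sup>*"
    unfolding conn_in_def by auto
  have "y e \<notin> T" using outside e(2) .
  with rtrancl_last_exit[OF path, of "\<lambda>a. y a \<in> T"] a0
  obtain a b where a: "y a \<in> T" and ab: "(a, b) \<in> ?E" and b: "y b \<notin> T"
    and b_path: "(b, e) \<in> (Restr ?E {a. y a \<notin> T})\<^sup>*"
    by blast
  have "(b, e) \<in> (rcm_edges p \<phi> (n, y, v) (S - T))\<^sup>*"
    unfolding rcm_edges_Diff[symmetric] by (rule b_path)
  moreover from ab have "alive n b" "y b \<in> S" by (auto simp: rcm_edges_def)
  ultimately have "\<forall>A. y b \<in> A \<longrightarrow> conn_in p \<phi> (n, y, v) (S - T) A A'"
    using b e \<open>y e \<notin> T\<close> unfolding conn_in_def prod.case by blast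
  with a ab b show thesis by (rule that)
qed

lemma not_conn_if_shield_vacant:
  fixes \<phi> :: "real \<Rightarrow> real"
  assumes phi_sup: "{r. r > 0 \<and> \<phi> r > 0} \<noteq> {} \<and> bdd_above {r. r > 0 \<and> \<phi> r > 0}
                  \<and> Sup {r. r > 0 \<and> \<phi> r > 0} = 1"
    and p1: "1 \<le> p" and B: "B = cubify (B \<inter> halfint)" and sep: "plusB R B \<inter> cubify K = {}"
    and y: "in_open_cells y" and v: "nonneg_on_pairs v"
    and vacant: "\<forall>k \<in> shield_cells R (linked_sites p \<phi> R B K (n, y, v)). n k = 0"
  shows "\<not> conn_in p \<phi> (n, y, v) B (cubify R) (cubify K)"
proof
  have y': "y a \<in> open_cell (fst a)" for a using y unfolding in_open_cells_def by blast
  have v': "0 \<le> v {a, b}" if "a \<noteq> b" for a b using v that unfolding nonneg_on_pairs_def by blast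
  assume conn: "conn_in p \<phi> (n, y, v) B (cubify R) (cubify K)"
  have "y e \<notin> cubify R" if "y e \<in> B \<inter> cubify K" for e
    using not_in_cubify_if_separated[OF B sep y'] that by blast
  \<comment> \<open>the last edge on which a path leaves the cubes of R ends at a site of U\<close>
  then obtain a b where a: "y a \<in> cubify R" and ab: "(a, b) \<in> rcm_edges p \<phi> (n, y, v) B"
    and b: "y b \<notin> cubify R"
    and b_conn: "\<forall>A. y b \<in> A \<longrightarrow> conn_in p \<phi> (n, y, v) (B - cubify R) A (cubify K)"
    by (rule conn_in_exit_edge[OF conn])
  from ab have alive: "alive n a" and in_B: "y a \<in> B" "y b \<in> B" by (auto simp: rcm_edges_def)
  have meet: "unit_cube (fst a) \<inter> unit_cube (fst b) \<noteq> {}"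
    by (rule rcm_edge_cells_meet[OF phi_sup p1 y' v' ab])
  have "cell_center (fst b) \<in> Delta R B"
    by (rule cell_center_in_Delta[OF B y' in_B(1) a y' in_B(2) b meet])
  moreover have "y b \<in> cubify {cell_center (fst b)}"
    using unit_cube_subset_cubify[of "fst b" "{cell_center (fst b)}"] cell_center_in_unit_cube
      open_cell_subset_unit_cube y' by blast
  ultimately have "cell_center (fst b) \<in> linked_sites p \<phi> R B K (n, y, v)"
    using b_conn by (simp add: linked_sites_def)
  moreover have "unit_cube (fst a) \<subseteq> cubify R"
    using a mem_cubify_open_cell[OF y'] unit_cube_subset_cubify by blast
  ultimately have "fst a \<in> shield_cells R (linked_sites p \<phi> R B K (n, y, v))"
    using meet by (auto simp: shield_cells_def)
  with vacant alive show False by (simp add: alive_def)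
qed

lemma conn_in_cong_counts:
  assumes y: "in_open_cells y" and agree: "\<And>k. \<not> unit_cube k \<subseteq> T \<Longrightarrow> n k = n' k"
  shows "conn_in p \<phi> (n, y, v) (S - T) X Y = conn_in p \<phi> (n', y, v) (S - T) X Y"
proof -
  have alive: "alive n a = alive n' a" if "y a \<in> S - T" for a
  proof -
    have "y a \<in> open_cell (fst a)" using y unfolding in_open_cells_def by blast
    then have "y a \<in> unit_cube (fst a)" using open_cell_subset_unit_cube by blast
    with that have "\<not> unit_cube (fst a) \<subseteq> T" by blast
    then show ?thesis using agree by (simp add: alive_def)
  qed
  then have edges: "rcm_edges p \<phi> (n, y, v) (S - T) = rcm_edges p \<phi> (n', y, v) (S - T)"
    unfolding rcm_edges_def by auto
  show ?thesis unfolding conn_in_def prod.case edges using alive by blast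
qed

lemma linked_sites_cong_counts:
  assumes "in_open_cells y" and "\<And>k. \<not> unit_cube k \<subseteq> cubify R \<Longrightarrow> n k = n' k"
  shows "linked_sites p \<phi> R B K (n, y, v) = linked_sites p \<phi> R B K (n', y, v)"
  unfolding linked_sites_def using conn_in_cong_counts[OF assms] by simp

section \<open>Product measures\<close>

lemma distr_merge_PiM:
  fixes M :: "'i \<Rightarrow> 'a measure"
  assumes M: "\<And>i. i \<in> I \<Longrightarrow> prob_space (M i)" and J: "J \<subseteq> I"
  shows "distr (PiM J M \<Otimes>\<^sub>M PiM (I - J) M) (PiM I M) (merge J (I - J)) = PiM I M"
proof (rule measure_eqI_PiM_infinite[symmetric, OF refl])
  interpret PO: prob_space "PiM (I - J) M" using M by (intro prob_space_PiM) auto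
  interpret P: prob_space "PiM I M" using M by (intro prob_space_PiM) auto
  have mm: "merge J (I - J) \<in> measurable (PiM J M \<Otimes>\<^sub>M PiM (I - J) M) (PiM I M)"
    using measurable_merge[of J "I - J" M] J by (simp add: Un_absorb1)
  show "sets (distr (PiM J M \<Otimes>\<^sub>M PiM (I - J) M) (PiM I M) (merge J (I - J))) = sets (PiM I M)"
    by simp
  show "finite_measure (PiM I M)" by unfold_locales
  fix F A assume F: "finite F" "F \<subseteq> I" and A: "\<And>i. i \<in> F \<Longrightarrow> A i \<in> sets (M i)"
  let ?X = "prod_emb I M F (Pi\<^sub>E F A)"
  let ?X1 = "prod_emb J M (F \<inter> J) (Pi\<^sub>E (F \<inter> J) A)"
  let ?X2 = "prod_emb (I - J) M (F - J) (Pi\<^sub>E (F - J) A)"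
  have "emeasure (PiM I M) ?X = (\<Prod>i\<in>F. emeasure (M i) (A i))"
    using M F A by (intro emeasure_PiM_emb) auto
  also have "\<dots> = (\<Prod>i\<in>F \<inter> J. emeasure (M i) (A i)) * (\<Prod>i\<in>F - J. emeasure (M i) (A i))"
    using F by (simp add: prod.Int_Diff[of F _ J])
  also have "(\<Prod>i\<in>F \<inter> J. emeasure (M i) (A i)) = emeasure (PiM J M) ?X1"
    using M F A J by (intro emeasure_PiM_emb[symmetric]) auto
  also have "(\<Prod>i\<in>F - J. emeasure (M i) (A i)) = emeasure (PiM (I - J) M) ?X2"
    using M F A J by (intro emeasure_PiM_emb[symmetric]) auto
  also have "emeasure (PiM J M) ?X1 * emeasure (PiM (I - J) M) ?X2 =
      emeasure (PiM J M \<Otimes>\<^sub>M PiM (I - J) M) (?X1 \<times> ?X2)"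
    using F A J by (intro PO.emeasure_pair_measure_Times[symmetric] sets_PiM_I) auto
  also have "?X1 \<times> ?X2 = merge J (I - J) -` ?X \<inter> space (PiM J M \<Otimes>\<^sub>M PiM (I - J) M)"
    using F J A[THEN sets.sets_into_space]
    by (auto simp: prod_emb_def space_pair_measure space_PiM PiE_iff merge_def extensional_def Pi_iff
        split: if_splits) (use F(2) in blast)
  also have "emeasure (PiM J M \<Otimes>\<^sub>M PiM (I - J) M) \<dots> =
      emeasure (distr (PiM J M \<Otimes>\<^sub>M PiM (I - J) M) (PiM I M) (merge J (I - J))) ?X"
    using F A by (intro emeasure_distr[symmetric] mm sets_PiM_I) auto
  finally show "emeasure (PiM I M) ?X =
      emeasure (distr (PiM J M \<Otimes>\<^sub>M PiM (I - J) M) (PiM I M) (merge J (I - J))) ?X" .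
qed

lemma emeasure_PiM_poisson_zero_ge:
  fixes lam :: real
  assumes lam: "0 < lam" and Q: "finite Q" "Q \<subseteq> J" "card Q \<le> N"
  shows "ennreal (exp (- lam * real N)) \<le> emeasure (PiM J (\<lambda>_. measure_pmf (poisson_pmf lam)))
           {x \<in> space (PiM J (\<lambda>_. measure_pmf (poisson_pmf lam))). \<forall>k\<in>Q. x k = 0}"
proof -
  let ?M = "\<lambda>_::'k. measure_pmf (poisson_pmf lam)"
  have "{x \<in> space (PiM J ?M). \<forall>k\<in>Q. x k = 0} = prod_emb J ?M Q (Pi\<^sub>E Q (\<lambda>_. {0}))"
    by (auto simp: prod_emb_def PiE_iff extensional_def space_PiM restrict_def fun_eq_iff) metis
  then have "emeasure (PiM J ?M) {x \<in> space (PiM J ?M). \<forall>k\<in>Q. x k = 0} = (\<Prod>i\<in>Q. emeasure (?M i) {0})"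
    using Q by (simp only:) (intro emeasure_PiM_emb prob_space_measure_pmf; simp)
  also have "\<dots> = ennreal (exp (- lam) ^ card Q)"
    by (simp add: emeasure_pmf_single pmf_poisson[OF lam] ennreal_power)
  also have "exp (- lam) ^ card Q = exp (- lam * real (card Q))"
    by (simp add: exp_of_nat_mult[symmetric] mult.commute)
  finally show ?thesis using Q(3) lam by (simp add: ennreal_leI)
qed

lemma emeasure_pair_measure_mono_alt:
  assumes "sigma_finite_measure M1" "sigma_finite_measure M2"
    and X: "X \<in> sets (M1 \<Otimes>\<^sub>M M2)" and Y: "Y \<in> sets (M1 \<Otimes>\<^sub>M M2)"
    and sections: "\<And>x. x \<in> space M1 \<Longrightarrow> c * emeasure M2 (Pair x -` X) \<le> emeasure M2 (Pair x -` Y)"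
  shows "c * emeasure (M1 \<Otimes>\<^sub>M M2) X \<le> emeasure (M1 \<Otimes>\<^sub>M M2) Y"
proof -
  interpret pair_sigma_finite M1 M2 by (intro pair_sigma_finite.intro assms(1,2))
  have "c * emeasure (M1 \<Otimes>\<^sub>M M2) X = c * (\<integral>\<^sup>+x. emeasure M2 (Pair x -` X) \<partial>M1)"
    by (simp add: M2.emeasure_pair_measure_alt[OF X])
  also have "\<dots> = (\<integral>\<^sup>+x. c * emeasure M2 (Pair x -` X) \<partial>M1)"
    by (rule nn_integral_cmult[symmetric]) (rule measurable_emeasure_Pair1[OF X])
  also have "\<dots> \<le> (\<integral>\<^sup>+x. emeasure M2 (Pair x -` Y) \<partial>M1)"
    by (rule nn_integral_mono) (rule sections)
  also have "\<dots> = emeasure (M1 \<Otimes>\<^sub>M M2) Y"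
    by (simp add: M2.emeasure_pair_measure_alt[OF Y])
  finally show ?thesis .
qed

lemma emeasure_pair_measure_mono_alt2:
  assumes "sigma_finite_measure M1" "sigma_finite_measure M2"
    and X: "X \<in> sets (M1 \<Otimes>\<^sub>M M2)" and Y: "Y \<in> sets (M1 \<Otimes>\<^sub>M M2)"
    and sections: "\<And>y. y \<in> space M2 \<Longrightarrow>
      c * emeasure M1 ((\<lambda>x. (x, y)) -` X) \<le> emeasure M1 ((\<lambda>x. (x, y)) -` Y)"
  shows "c * emeasure (M1 \<Otimes>\<^sub>M M2) X \<le> emeasure (M1 \<Otimes>\<^sub>M M2) Y"
proof -
  interpret pair_sigma_finite M1 M2 by (intro pair_sigma_finite.intro assms(1,2))
  have "c * emeasure (M1 \<Otimes>\<^sub>M M2) X = c * (\<integral>\<^sup>+y. emeasure M1 ((\<lambda>x. (x, y)) -` X) \<partial>M2)"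
    by (simp add: emeasure_pair_measure_alt2[OF X])
  also have "\<dots> = (\<integral>\<^sup>+y. c * emeasure M1 ((\<lambda>x. (x, y)) -` X) \<partial>M2)"
    by (rule nn_integral_cmult[symmetric]) (rule measurable_emeasure_Pair2[OF X])
  also have "\<dots> \<le> (\<integral>\<^sup>+y. emeasure M1 ((\<lambda>x. (x, y)) -` Y) \<partial>M2)"
    by (rule nn_integral_mono) (rule sections)
  also have "\<dots> = emeasure (M1 \<Otimes>\<^sub>M M2) Y"
    by (simp add: emeasure_pair_measure_alt2[OF Y])
  finally show ?thesis .
qed

lemma sets_Pair_middle:
  assumes "X \<in> sets (L \<Otimes>\<^sub>M (M \<Otimes>\<^sub>M N))"
  shows "{y. (x, y, z) \<in> X} \<in> sets M"
  using sets_Pair2[OF sets_Pair1[OF assms], of z x] by (simp add: vimage_def)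

lemma emeasure_pair_measure_mono_middle:
  assumes "sigma_finite_measure L" "sigma_finite_measure M" "sigma_finite_measure N"
    and X: "X \<in> sets (L \<Otimes>\<^sub>M (M \<Otimes>\<^sub>M N))" and Y: "Y \<in> sets (L \<Otimes>\<^sub>M (M \<Otimes>\<^sub>M N))"
    and sections: "\<And>x z. x \<in> space L \<Longrightarrow> z \<in> space N \<Longrightarrow>
      c * emeasure M {y. (x, y, z) \<in> X} \<le> emeasure M {y. (x, y, z) \<in> Y}"
  shows "c * emeasure (L \<Otimes>\<^sub>M (M \<Otimes>\<^sub>M N)) X \<le> emeasure (L \<Otimes>\<^sub>M (M \<Otimes>\<^sub>M N)) Y"
proof (rule emeasure_pair_measure_mono_alt[OF assms(1) _ X Y])
  show "sigma_finite_measure (M \<Otimes>\<^sub>M N)"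
    using assms(2,3) by (rule sigma_finite_pair_measure)
  fix x assume "x \<in> space L"
  with sections show "c * emeasure (M \<Otimes>\<^sub>M N) (Pair x -` X) \<le> emeasure (M \<Otimes>\<^sub>M N) (Pair x -` Y)"
    by (intro emeasure_pair_measure_mono_alt2[OF assms(2,3)] sets_Pair1[OF X] sets_Pair1[OF Y])
      (simp add: vimage_def)
qed

lemma emeasure_PiM_mono_merge_sections:
  fixes M :: "'i \<Rightarrow> 'a measure"
  assumes M: "\<And>i. i \<in> I \<Longrightarrow> prob_space (M i)" and J: "J \<subseteq> I"
    and A: "A \<in> sets (PiM I M)" and D: "D \<in> sets (PiM I M)"
    and sections: "\<And>y. y \<in> space (PiM (I - J) M) \<Longrightarrow>
      c * emeasure (PiM J M) {x \<in> space (PiM J M). merge J (I - J) (x, y) \<in> A}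
      \<le> emeasure (PiM J M) {x \<in> space (PiM J M). merge J (I - J) (x, y) \<in> D}"
  shows "c * emeasure (PiM I M) A \<le> emeasure (PiM I M) D"
proof -
  let ?PJ = "PiM J M" and ?PO = "PiM (I - J) M" and ?m = "merge J (I - J)"
  interpret PJ: prob_space ?PJ using M J by (intro prob_space_PiM) auto
  interpret PO: prob_space ?PO using M by (intro prob_space_PiM) auto
  have mm: "?m \<in> measurable (?PJ \<Otimes>\<^sub>M ?PO) (PiM I M)"
    using measurable_merge[of J "I - J" M] J by (simp add: Un_absorb1)
  have emeasure_merge: "emeasure (PiM I M) X = emeasure (?PJ \<Otimes>\<^sub>M ?PO) (?m -` X \<inter> space (?PJ \<Otimes>\<^sub>M ?PO))"
    if "X \<in> sets (PiM I M)" for X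
    using emeasure_distr[OF mm that] distr_merge_PiM[OF M J] by simp
  have "c * emeasure (?PJ \<Otimes>\<^sub>M ?PO) (?m -` A \<inter> space (?PJ \<Otimes>\<^sub>M ?PO))
      \<le> emeasure (?PJ \<Otimes>\<^sub>M ?PO) (?m -` D \<inter> space (?PJ \<Otimes>\<^sub>M ?PO))"
  proof (rule emeasure_pair_measure_mono_alt2)
    fix y assume "y \<in> space ?PO"
    then have "(\<lambda>x. (x, y)) -` (?m -` X \<inter> space (?PJ \<Otimes>\<^sub>M ?PO)) = {x \<in> space ?PJ. ?m (x, y) \<in> X}" for X
      by (auto simp: space_pair_measure)
    with sections[OF \<open>y \<in> space ?PO\<close>]
    show "c * emeasure ?PJ ((\<lambda>x. (x, y)) -` (?m -` A \<inter> space (?PJ \<Otimes>\<^sub>M ?PO)))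
        \<le> emeasure ?PJ ((\<lambda>x. (x, y)) -` (?m -` D \<inter> space (?PJ \<Otimes>\<^sub>M ?PO)))" by simp
  qed (use measurable_sets[OF mm A] measurable_sets[OF mm D] in
        \<open>simp_all add: PJ.sigma_finite_measure_axioms PO.sigma_finite_measure_axioms\<close>)
  then show ?thesis using emeasure_merge[OF A] emeasure_merge[OF D] by simp
qed

lemma emeasure_PiM_poisson_vanish_ge:
  fixes lam :: real and N :: nat
  defines "C \<equiv> PiM UNIV (\<lambda>_::'k. measure_pmf (poisson_pmf lam))"
  assumes lam: "0 < lam"
    and A: "A \<in> sets C" and D: "D \<in> sets C"
    and A_indep: "\<And>n n'. (\<And>k. k \<notin> J \<Longrightarrow> n k = n' k) \<Longrightarrow> n \<in> A \<longleftrightarrow> n' \<in> A"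
    and Q_indep: "\<And>n n'. (\<And>k. k \<notin> J \<Longrightarrow> n k = n' k) \<Longrightarrow> Q n = Q n'"
    and Q: "\<And>n. n \<in> A \<Longrightarrow> finite (Q n) \<and> Q n \<subseteq> J \<and> card (Q n) \<le> N"
    and D_eq: "\<And>n. n \<in> space C \<Longrightarrow> n \<in> D \<longleftrightarrow> n \<in> A \<and> (\<forall>k\<in>Q n. n k = 0)"
  shows "ennreal (exp (- lam * real N)) * emeasure C A \<le> emeasure C D"
  unfolding C_def
proof (rule emeasure_PiM_mono_merge_sections[OF prob_space_measure_pmf subset_UNIV A[unfolded C_def] D[unfolded C_def]])
  let ?M = "\<lambda>_::'k. measure_pmf (poisson_pmf lam)"
  let ?PJ = "PiM J ?M" and ?m = "merge J (UNIV - J)"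
  interpret PJ: prob_space ?PJ by (intro prob_space_PiM prob_space_measure_pmf)
  fix y assume y: "y \<in> space (PiM (UNIV - J) ?M)"
  define x0 :: "'k \<Rightarrow> nat" where "x0 = (\<lambda>k\<in>J. 0)"
  \<comment> \<open>A and Q do not see the coordinates in J, so they can be evaluated with these set to 0\<close>
  have outside: "?m (x, y) k = ?m (x0, y) k" if "k \<notin> J" for x k
    using that by (simp add: merge_def)
  have A_outside: "?m (x, y) \<in> A \<longleftrightarrow> ?m (x0, y) \<in> A" for x
    by (rule A_indep) (rule outside)
  show "ennreal (exp (- lam * real N)) * emeasure ?PJ {x \<in> space ?PJ. ?m (x, y) \<in> A}
        \<le> emeasure ?PJ {x \<in> space ?PJ. ?m (x, y) \<in> D}"
  proof (cases "?m (x0, y) \<in> A")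
    case True
    let ?Q = "Q (?m (x0, y))"
    have Q0: "finite ?Q" "?Q \<subseteq> J" "card ?Q \<le> N" using Q[OF True] by auto
    have "?m (x, y) \<in> D \<longleftrightarrow> (\<forall>k\<in>?Q. x k = 0)" if x: "x \<in> space ?PJ" for x
    proof -
      have "?m \<in> measurable (?PJ \<Otimes>\<^sub>M PiM (UNIV - J) ?M) C"
        using measurable_merge[of J "UNIV - J" ?M] unfolding C_def by simp
      from measurable_space[OF this, of "(x, y)"] x y have "?m (x, y) \<in> space C"
        by (simp add: space_pair_measure)
      moreover have "?m (x, y) \<in> A" using A_outside True by blast
      moreover have "Q (?m (x, y)) = ?Q" by (rule Q_indep) (rule outside)
      moreover have "\<forall>k\<in>?Q. ?m (x, y) k = x k" using Q0(2) by (auto simp: merge_def)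
      ultimately show ?thesis using D_eq by simp
    qed
    then have "{x \<in> space ?PJ. ?m (x, y) \<in> D} = {x \<in> space ?PJ. \<forall>k\<in>?Q. x k = 0}" by blast
    moreover have "ennreal (exp (- lam * real N)) * emeasure ?PJ {x \<in> space ?PJ. ?m (x, y) \<in> A}
        \<le> ennreal (exp (- lam * real N)) * 1"
      by (intro mult_left_mono PJ.emeasure_le_1) simp
    ultimately show ?thesis using emeasure_PiM_poisson_zero_ge[OF lam Q0] by simp
  next
    case False
    then have "{x \<in> space ?PJ. ?m (x, y) \<in> A} = {}" using A_outside by blast
    then show ?thesis by (simp only: emeasure_empty mult_zero_right zero_le)
  qed
qed

lemma (in finite_measure) measure_le_exp_mult_measure:
  assumes "ennreal (exp (- a)) * emeasure M A \<le> emeasure M D" "D \<subseteq> E" "E \<in> sets M"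
  shows "measure M A \<le> exp a * measure M E"
proof -
  have "ennreal (exp (- a) * measure M A) \<le> ennreal (measure M D)"
    using assms(1) by (simp add: emeasure_eq_measure ennreal_mult)
  also have "\<dots> \<le> ennreal (measure M E)" using finite_measure_mono[OF assms(2,3)] by (rule ennreal_leI)
  finally have "exp (- a) * measure M A \<le> measure M E" by (simp add: ennreal_le_iff)
  then have "exp a * (exp (- a) * measure M A) \<le> exp a * measure M E" by (rule mult_left_mono) simp
  then show ?thesis by (simp add: mult.assoc[symmetric] exp_minus_inverse)
qed

section \<open>Measurability\<close>

lemma borel_measurable_lp_norm [measurable]: "lp_norm p \<in> borel_measurable borel"
proof (cases "p = \<infinity>")
  case True
  then have "lp_norm p = (\<lambda>x. Max (range (\<lambda>i. \<bar>x $ i\<bar>)))" by (simp add: lp_norm_def fun_eq_iff)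
  also have "\<dots> \<in> borel_measurable borel" by measurable
  finally show ?thesis .
next
  case False
  then have "lp_norm p = (\<lambda>x. (\<Sum>i\<in>UNIV. \<bar>x $ i\<bar> powr real_of_ereal p) powr (1 / real_of_ereal p))"
    by (simp add: lp_norm_def fun_eq_iff)
  also have "\<dots> \<in> borel_measurable borel" by measurable
  finally show ?thesis .
qed

lemma borel_measurable_antimono_max0:
  fixes \<phi> :: "real \<Rightarrow> real"
  assumes phi_mono: "\<forall>r s. 0 \<le> r \<longrightarrow> r \<le> s \<longrightarrow> \<phi> s \<le> \<phi> r"
  shows "(\<lambda>r. \<phi> (max r 0)) \<in> borel_measurable borel"
proof -
  have "mono (\<lambda>r. - \<phi> (max r 0))"
    using phi_mono by (auto simp: mono_def)
  then have "(\<lambda>r. - \<phi> (max r 0)) \<in> borel_measurable borel" by (rule borel_measurable_mono)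
  then have "(\<lambda>r. - (- \<phi> (max r 0))) \<in> borel_measurable borel" by measurable
  then show ?thesis by simp
qed

lemma pred_in_relpow:
  fixes E :: "'b \<Rightarrow> ('a::countable \<times> 'a) set"
  assumes "\<And>a b. Measurable.pred N (\<lambda>\<omega>. (a, b) \<in> E \<omega>)"
  shows "Measurable.pred N (\<lambda>\<omega>. (a, b) \<in> (E \<omega>) ^^ m)"
proof (induction m arbitrary: b)
  case 0
  have "(\<lambda>\<omega>. (a, b) \<in> E \<omega> ^^ 0) = (\<lambda>\<omega>. a = b)" by auto
  then show ?case by (cases "a = b") auto
next
  case (Suc m)
  have "Measurable.pred N (\<lambda>\<omega>. \<exists>c. (a, c) \<in> (E \<omega>) ^^ m \<and> (c, b) \<in> E \<omega>)"
    using Suc assms by measurable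
  moreover have "(\<lambda>\<omega>. (a, b) \<in> E \<omega> ^^ Suc m) = (\<lambda>\<omega>. \<exists>c. (a, c) \<in> E \<omega> ^^ m \<and> (c, b) \<in> E \<omega>)"
    by (rule ext) (simp only: relpow.simps relcomp.simps; blast)
  ultimately show ?case by simp
qed

lemma pred_in_rtrancl:
  fixes E :: "'b \<Rightarrow> ('a::countable \<times> 'a) set"
  assumes "\<And>a b. Measurable.pred N (\<lambda>\<omega>. (a, b) \<in> E \<omega>)"
  shows "Measurable.pred N (\<lambda>\<omega>. (a, b) \<in> (E \<omega>)\<^sup>*)"
proof -
  have "Measurable.pred N (\<lambda>\<omega>. \<exists>m. (a, b) \<in> (E \<omega>) ^^ m)"
    using pred_in_relpow[OF assms] by measurable
  then show ?thesis by (simp add: rtrancl_power)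
qed

context
  fixes N :: "'b measure" and nf :: "'b \<Rightarrow> int^'n \<Rightarrow> nat" and yf :: "'b \<Rightarrow> 'n lab \<Rightarrow> real^'n"
    and vf :: "'b \<Rightarrow> 'n lab set \<Rightarrow> real" and lam :: real
  assumes nf: "nf \<in> measurable N (count_law lam)"
    and yf: "yf \<in> measurable N pos_law"
    and vf: "vf \<in> measurable N edge_law"
begin

lemma measurable_count_coord: "(\<lambda>\<omega>. nf \<omega> k) \<in> measurable N (count_space UNIV)"
proof -
  have "(\<lambda>\<omega>. nf \<omega> k) \<in> measurable N (measure_pmf (poisson_pmf lam))"
    using measurable_compose[OF nf[unfolded count_law_def] measurable_component_singleton[of k UNIV]]
    by simp
  then show ?thesis by simp
qed

lemma pred_alive: "Measurable.pred N (\<lambda>\<omega>. alive (nf \<omega>) a)"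
  unfolding alive_def using measurable_count_coord[of "fst a"] by measurable

lemma borel_measurable_position [measurable]: "(\<lambda>\<omega>. yf \<omega> a) \<in> borel_measurable N"
proof -
  have coord: "(\<lambda>\<omega>. yf \<omega> a) \<in> measurable N (uniform_measure lborel (unit_cube (fst a)))"
    using measurable_compose[OF yf[unfolded pos_law_def] measurable_component_singleton[of a UNIV]]
    by simp
  have "sets (uniform_measure lborel (unit_cube (fst a))) = sets borel" by simp
  from measurable_cong_sets[OF refl this, of N] coord show ?thesis by simp
qed

lemma borel_measurable_edge_var [measurable]: "a \<noteq> b \<Longrightarrow> (\<lambda>\<omega>. vf \<omega> {a, b}) \<in> borel_measurable N"
proof -
  assume "a \<noteq> b"
  then have "{a, b} \<in> {S. card S = 2}" by simp
  then have coord: "(\<lambda>\<omega>. vf \<omega> {a, b}) \<in> measurable N (uniform_measure lborel {0..1::real})"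
    using measurable_compose[OF vf[unfolded edge_law_def] measurable_component_singleton[of "{a,b}" "{S. card S = 2}"]]
    by simp
  have "sets (uniform_measure lborel {0..1::real}) = sets borel" by simp
  from measurable_cong_sets[OF refl this, of N] coord show ?thesis by simp
qed

lemma pred_in_rcm_edges:
  assumes p1: "1 \<le> p" and phi_mono: "\<forall>r s. 0 \<le> r \<longrightarrow> r \<le> s \<longrightarrow> \<phi> s \<le> \<phi> r"
    and S: "S \<in> sets borel"
  shows "Measurable.pred N (\<lambda>\<omega>. (a, b) \<in> rcm_edges p \<phi> (nf \<omega>, yf \<omega>, vf \<omega>) S)"
proof (cases "a = b")
  case True then show ?thesis by (simp add: rcm_edges_def)
next
  case False
  have eq: "\<phi> (lp_norm p x) = (\<lambda>r. \<phi> (max r 0)) (lp_norm p x)" for x :: "real^'n"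
    using lp_norm_nonneg[OF p1, of x] by simp
  have ps: "(\<lambda>r. \<phi> (max r 0)) \<in> borel_measurable borel" by (rule borel_measurable_antimono_max0[OF phi_mono])
  have "Measurable.pred N (\<lambda>\<omega>. vf \<omega> {a, b} < (\<lambda>r. \<phi> (max r 0)) (lp_norm p (yf \<omega> b - yf \<omega> a)))"
    using False ps by measurable
  then have "Measurable.pred N (\<lambda>\<omega>. alive (nf \<omega>) a \<and> alive (nf \<omega>) b \<and> yf \<omega> a \<in> S \<and> yf \<omega> b \<in> S \<and>
     vf \<omega> {a, b} < (\<lambda>r. \<phi> (max r 0)) (lp_norm p (yf \<omega> b - yf \<omega> a)))"
    using pred_alive[of a] pred_alive[of b] S by measurable
  then show ?thesis using False by (simp add: rcm_edges_def eq[symmetric])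
qed

lemma pred_conn_in:
  assumes p1: "1 \<le> p" and phi_mono: "\<forall>r s. 0 \<le> r \<longrightarrow> r \<le> s \<longrightarrow> \<phi> s \<le> \<phi> r"
    and S: "S \<in> sets borel" and A: "A \<in> sets borel"
    and A': "\<And>b. Measurable.pred N (\<lambda>\<omega>. yf \<omega> b \<in> Af \<omega>)"
  shows "Measurable.pred N (\<lambda>\<omega>. conn_in p \<phi> (nf \<omega>, yf \<omega>, vf \<omega>) S A (Af \<omega>))"
proof -
  have E: "Measurable.pred N (\<lambda>\<omega>. (a, b) \<in> (rcm_edges p \<phi> (nf \<omega>, yf \<omega>, vf \<omega>) S)\<^sup>*)" for a b
    by (rule pred_in_rtrancl) (rule pred_in_rcm_edges[OF p1 phi_mono S])
  have "Measurable.pred N (\<lambda>\<omega>. \<exists>a b. alive (nf \<omega>) a \<and> alive (nf \<omega>) b \<and> yf \<omega> a \<in> S \<inter> A \<and>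
         (yf \<omega> b \<in> S \<and> yf \<omega> b \<in> Af \<omega>) \<and> (a, b) \<in> (rcm_edges p \<phi> (nf \<omega>, yf \<omega>, vf \<omega>) S)\<^sup>*)"
    using pred_alive E A' S A by measurable
  moreover have "(\<lambda>\<omega>. conn_in p \<phi> (nf \<omega>, yf \<omega>, vf \<omega>) S A (Af \<omega>)) = (\<lambda>\<omega>. \<exists>a b. alive (nf \<omega>) a \<and> alive (nf \<omega>) b \<and> yf \<omega> a \<in> S \<inter> A \<and>
         (yf \<omega> b \<in> S \<and> yf \<omega> b \<in> Af \<omega>) \<and> (a, b) \<in> (rcm_edges p \<phi> (nf \<omega>, yf \<omega>, vf \<omega>) S)\<^sup>*)"
    unfolding conn_in_def prod.case by (rule ext) blast
  ultimately show ?thesis by simp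
qed

end

section \<open>Almost sure regularity\<close>

lemma emeasure_unit_cube: "emeasure lborel (unit_cube k) = 1"
proof -
  have fin: "emeasure lborel (unit_cube k) \<noteq> \<top>"
    unfolding unit_cube_def using emeasure_lborel_cbox_finite by (simp add: less_top)
  have "emeasure lborel (unit_cube k) = ennreal (measure lborel (unit_cube k))"
    using fin by (rule emeasure_eq_ennreal_measure)
  also have "measure lborel (unit_cube k) = 1"
  proof -
    have "unit_cube k \<noteq> {}" using open_cell_subset_unit_cube[of k] cell_center_in_open_cell[of k] by blast
    then show ?thesis unfolding unit_cube_def by (subst content_cbox_cart) simp_all
  qed
  finally show ?thesis by simp
qed

lemma prob_space_uniform_unit_cube: "prob_space (uniform_measure lborel (unit_cube k))"
  by (rule prob_space_uniform_measure) (simp_all add: emeasure_unit_cube)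

lemma prob_space_uniform_01: "prob_space (uniform_measure lborel {0..1::real})"
  by (rule prob_space_uniform_measure) simp_all

lemma prob_space_count_law: "prob_space (count_law lam)"
  unfolding count_law_def by (intro prob_space_PiM) (simp add: prob_space_measure_pmf)

lemma prob_space_pos_law: "prob_space pos_law"
  unfolding pos_law_def by (intro prob_space_PiM prob_space_uniform_unit_cube)

lemma prob_space_edge_law: "prob_space edge_law"
  unfolding edge_law_def by (intro prob_space_PiM prob_space_uniform_01)

lemma prob_space_rcm_law: "prob_space (rcm_law lam)"
  unfolding rcm_law_def by (intro prob_space_pair prob_space_count_law prob_space_pos_law prob_space_edge_law)

lemma pred_in_open_cells: "Measurable.pred pos_law in_open_cells"
proof -
  have "(\<lambda>y. y a) \<in> borel_measurable pos_law" for a :: "'n::finite lab"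
  proof -
    have coord: "(\<lambda>y. y a) \<in> measurable pos_law (uniform_measure lborel (unit_cube (fst a)))"
      unfolding pos_law_def by (rule measurable_component_singleton) simp
    have eq: "measurable pos_law (uniform_measure lborel (unit_cube (fst a))) = measurable pos_law borel"
      by (rule measurable_cong_sets) simp_all
    from coord show ?thesis unfolding eq .
  qed
  then have "Measurable.pred pos_law (\<lambda>y. \<forall>a::'n::finite lab. y a \<in> open_cell (fst a))"
    by (intro pred_intros_countable pred_sets2[OF sets_open_cell])
  then show ?thesis unfolding in_open_cells_def .
qed

lemma pred_nonneg_on_pairs: "Measurable.pred edge_law (nonneg_on_pairs :: ('n::finite lab set \<Rightarrow> real) \<Rightarrow> bool)"
proof -
  have "Measurable.pred edge_law (\<lambda>v. a \<noteq> b \<longrightarrow> 0 \<le> v {a, b})" for a b :: "'n::finite lab"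
  proof (cases "a = b")
    case False
    then have "{a, b} \<in> {S. card S = 2}" by simp
    then have coord: "(\<lambda>v. v {a, b}) \<in> measurable edge_law (uniform_measure lborel {0..1::real})"
      unfolding edge_law_def by (rule measurable_component_singleton)
    have eq: "measurable edge_law (uniform_measure lborel {0..1::real}) = measurable edge_law borel"
      by (rule measurable_cong_sets) simp_all
    from coord have "(\<lambda>v. v {a, b}) \<in> borel_measurable edge_law" unfolding eq .
    then have "Measurable.pred edge_law (\<lambda>v. 0 \<le> v {a, b})" by measurable
    moreover have "(\<lambda>v::'n lab set \<Rightarrow> real. a \<noteq> b \<longrightarrow> 0 \<le> v {a, b}) = (\<lambda>v. 0 \<le> v {a, b})"
      using False by auto
    ultimately show ?thesis by (simp only:)
  next
    case True
    then have eq: "(\<lambda>v::'n lab set \<Rightarrow> real. a \<noteq> b \<longrightarrow> 0 \<le> v {a, b}) = (\<lambda>v. True)" by auto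
    show ?thesis unfolding eq by (rule measurable_const) simp
  qed
  then have "Measurable.pred edge_law (\<lambda>v. \<forall>a b::'n::finite lab. a \<noteq> b \<longrightarrow> 0 \<le> v {a, b})"
    by (intro pred_intros_countable)
  then show ?thesis unfolding nonneg_on_pairs_def .
qed

lemma AE_in_open_cells: "AE y in pos_law. in_open_cells y"
  unfolding in_open_cells_def AE_all_countable
proof
  fix a :: "'n::finite lab"
  let ?a = "(\<chi> i. real_of_int (fst a $ i))" and ?b = "(\<chi> i. real_of_int (fst a $ i) + 1)"
  have cb: "unit_cube (fst a) = cbox ?a ?b" by (simp add: unit_cube_def)
  have ob: "open_cell (fst a) = box ?a ?b" by (simp add: open_cell_def)
  have "emeasure lborel (cbox ?a ?b - box ?a ?b) = emeasure lborel (cbox ?a ?b) - emeasure lborel (box ?a ?b)"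
    using emeasure_lborel_box_finite[of ?a ?b] by (intro emeasure_Diff) (auto simp: box_subset_cbox)
  also have "\<dots> = 0" by (simp add: emeasure_lborel_cbox_eq emeasure_lborel_box_eq)
  finally have "cbox ?a ?b - box ?a ?b \<in> null_sets lborel" by (auto simp: null_sets_def)
  then have "AE x in lborel. x \<in> unit_cube (fst a) \<longrightarrow> x \<in> open_cell (fst a)"
    by (rule AE_I') (auto simp: cb ob)
  then have "AE x in uniform_measure lborel (unit_cube (fst a)). x \<in> open_cell (fst a)"
    by (intro AE_uniform_measureI) (auto simp: unit_cube_def)
  then show "AE y in pos_law. y a \<in> open_cell (fst a)"
    unfolding pos_law_def by (rule AE_PiM_component[OF prob_space_uniform_unit_cube UNIV_I])
qed

lemma AE_nonneg_on_pairs: "AE v in edge_law. nonneg_on_pairs (v :: 'n::finite lab set \<Rightarrow> real)"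
  unfolding nonneg_on_pairs_def AE_all_countable
proof (intro allI)
  fix a b :: "'n::finite lab"
  show "AE v in edge_law. a \<noteq> b \<longrightarrow> 0 \<le> v {a, b}"
  proof (cases "a = b")
    case False
    then have ab: "{a, b} \<in> {S. card S = 2}" by simp
    have "AE x in uniform_measure lborel {0..1::real}. 0 \<le> x"
      by (intro AE_uniform_measureI AE_I2) auto
    then have "AE v in edge_law. 0 \<le> v {a, b}"
      unfolding edge_law_def by (rule AE_PiM_component[OF prob_space_uniform_01 ab])
    then show ?thesis by (simp add: False)
  qed simp
qed

lemma AE_rcm_law_regular:
  "AE r in rcm_law lam. in_open_cells (fst (snd r)) \<and>
    nonneg_on_pairs (snd (snd (r :: (int^'n \<Rightarrow> nat) \<times> ('n lab \<Rightarrow> real^'n) \<times> ('n lab set \<Rightarrow> real))))"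
proof -
  let ?P = "pos_law :: ('n lab \<Rightarrow> real^'n) measure"
  let ?E = "edge_law :: ('n lab set \<Rightarrow> real) measure"
  let ?C = "count_law lam :: (int^'n \<Rightarrow> nat) measure"
  interpret C: prob_space "?C" by (rule prob_space_count_law)
  interpret P: prob_space ?P by (rule prob_space_pos_law)
  interpret E: prob_space ?E by (rule prob_space_edge_law)
  interpret PE: prob_space "?P \<Otimes>\<^sub>M ?E" by (intro prob_space_pair prob_space_pos_law prob_space_edge_law)
  interpret PP1: pair_sigma_finite ?P ?E ..
  interpret PP2: pair_sigma_finite "?C" "?P \<Otimes>\<^sub>M ?E" ..
  have m1: "Measurable.pred (?P \<Otimes>\<^sub>M ?E) (\<lambda>w. in_open_cells (fst w) \<and> nonneg_on_pairs (snd w))"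
    by (intro pred_intros_logic(3) measurable_compose[OF measurable_fst pred_in_open_cells]
        measurable_compose[OF measurable_snd pred_nonneg_on_pairs])
  have m2: "Measurable.pred (?C \<Otimes>\<^sub>M (?P \<Otimes>\<^sub>M ?E))
      (\<lambda>r. in_open_cells (fst (snd r)) \<and> nonneg_on_pairs (snd (snd r)))"
    by (intro pred_intros_logic(3) measurable_compose[OF measurable_compose[OF measurable_snd measurable_fst] pred_in_open_cells]
        measurable_compose[OF measurable_compose[OF measurable_snd measurable_snd] pred_nonneg_on_pairs])
  have "AE w in ?P \<Otimes>\<^sub>M ?E. in_open_cells (fst w) \<and> nonneg_on_pairs (snd w)"
  proof (rule PP1.AE_pair_measure)
    show "{x \<in> space (?P \<Otimes>\<^sub>M ?E). in_open_cells (fst x) \<and> nonneg_on_pairs (snd x)} \<in> sets (?P \<Otimes>\<^sub>M ?E)"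
      using m1 unfolding pred_def .
    show "AE y in ?P. AE v in ?E. in_open_cells (fst (y, v)) \<and> nonneg_on_pairs (snd (y, v))"
      using AE_in_open_cells by eventually_elim (use AE_nonneg_on_pairs in simp)
  qed
  then have "AE r in ?C \<Otimes>\<^sub>M (?P \<Otimes>\<^sub>M ?E). in_open_cells (fst (snd r)) \<and> nonneg_on_pairs (snd (snd r))"
  proof (intro PP2.AE_pair_measure)
    show "{x \<in> space (?C \<Otimes>\<^sub>M (?P \<Otimes>\<^sub>M ?E)). in_open_cells (fst (snd x)) \<and> nonneg_on_pairs (snd (snd x))}
       \<in> sets (?C \<Otimes>\<^sub>M (?P \<Otimes>\<^sub>M ?E))"
      using m2 unfolding pred_def .
  qed simp
  then show ?thesis unfolding rcm_law_def .
qed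

lemma finite_card_shield_cells:
  fixes U :: "(real^'n) set"
  assumes U: "U \<subseteq> halfint" "finite U" "card U \<le> t"
  shows "finite (shield_cells R U) \<and> shield_cells R U \<subseteq> {k. unit_cube k \<subseteq> cubify R} \<and>
    card (shield_cells R U) \<le> 3 ^ CARD('n) * t"
proof -
  let ?nb = "\<lambda>k'. {k. unit_cube k \<inter> unit_cube (k' :: int^'n) \<noteq> {}}"
  let ?V = "cell_center -` U"
  have fin_V: "finite ?V" using U(2) inj_cell_center by (intro finite_vimageI) auto
  have card_V: "card ?V = card U"
    using U inj_cell_center halfint_eq_range_cell_center by (intro card_vimage_inj) auto
  have sub: "shield_cells R U \<subseteq> (\<Union>k'\<in>?V. ?nb k')" by (auto simp: shield_cells_def)
  have fin: "finite (\<Union>k'\<in>?V. ?nb k')" using fin_V finite_card_neighbour_cells by blast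
  have "card (shield_cells R U) \<le> card (\<Union>k'\<in>?V. ?nb k')" by (rule card_mono[OF fin sub])
  also have "\<dots> \<le> (\<Sum>k'\<in>?V. card (?nb k'))" by (rule card_UN_le[OF fin_V])
  also have "\<dots> \<le> (\<Sum>k'\<in>?V. 3 ^ CARD('n))" by (intro sum_mono) (use finite_card_neighbour_cells in blast)
  also have "\<dots> \<le> 3 ^ CARD('n) * t" using U(3) by (simp add: card_V)
  finally show ?thesis using finite_subset[OF sub fin] by (auto simp: shield_cells_def)
qed

lemma pred_finite_card_le:
  fixes S :: "'b \<Rightarrow> 'a set"
  assumes T: "countable T" and S: "\<And>x. S x \<subseteq> T"
    and mem: "\<And>i. i \<in> T \<Longrightarrow> Measurable.pred M (\<lambda>x. i \<in> S x)"
  shows "Measurable.pred M (\<lambda>x. finite (S x) \<and> card (S x) \<le> t)"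
proof -
  let ?F = "{F. finite F \<and> F \<subseteq> T \<and> card F = Suc t}"
  have "countable ?F"
    by (rule countable_subset[OF _ countable_Collect_finite_subset[OF T]]) auto
  moreover have "countable F" if "F \<in> ?F" for F using that by (simp add: countable_finite)
  ultimately have "Measurable.pred M (\<lambda>x. \<forall>F\<in>?F. \<not> (\<forall>i\<in>F. i \<in> S x))"
    using mem by (intro measurable_pred_countable pred_intros_logic(2)) auto
  moreover have "finite (S x) \<and> card (S x) \<le> t \<longleftrightarrow> (\<forall>F\<in>?F. \<not> (\<forall>i\<in>F. i \<in> S x))" for x
  proof
    assume "finite (S x) \<and> card (S x) \<le> t"
    then show "\<forall>F\<in>?F. \<not> (\<forall>i\<in>F. i \<in> S x)" using card_mono[of "S x"] by force
  next
    assume none: "\<forall>F\<in>?F. \<not> (\<forall>i\<in>F. i \<in> S x)"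
    show "finite (S x) \<and> card (S x) \<le> t"
    proof (rule ccontr)
      assume "\<not> (finite (S x) \<and> card (S x) \<le> t)"
      then obtain F where "F \<subseteq> S x" "finite F" "card F = Suc t"
        by (metis infinite_arbitrarily_large not_less_eq_eq obtain_subset_with_card_n)
      with S none show False by blast
    qed
  qed
  ultimately show ?thesis by simp
qed

section \<open>The events of the lemma\<close>

definition marked_sites :: "(real^'n) set \<Rightarrow> (real^'n \<Rightarrow> bool) \<Rightarrow> (real^'n) set" where
  "marked_sites B \<kappa> = {z \<in> halfint \<inter> B. \<kappa> z}"

lemma mem_cubify_marked_sites:
  "x \<in> cubify (marked_sites B \<kappa>) \<longleftrightarrow> (\<exists>k. cell_center k \<in> marked_sites B \<kappa> \<and> x \<in> unit_cube k)"
proof -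
  have "marked_sites B \<kappa> \<subseteq> halfint" by (auto simp: marked_sites_def)
  then have "cubify (marked_sites B \<kappa>) = (\<Union>k\<in>{k. cell_center k \<in> marked_sites B \<kappa>}. unit_cube k)"
    by (rule cubify_halfint)
  then show ?thesis by blast
qed

context
  fixes lam :: real and p :: ereal and \<phi> :: "real \<Rightarrow> real" and R B :: "(real^'n) set"
    and K_law :: "(real^'n \<Rightarrow> bool) measure"
  assumes K_sets: "sets K_law = sets (\<Pi>\<^sub>M z\<in>halfint \<inter> B. count_space (UNIV :: bool set))"
    and B: "B = cubify (B \<inter> halfint)"
    and p1: "1 \<le> p"
    and phi_mono: "\<forall>r s. 0 \<le> r \<longrightarrow> r \<le> s \<longrightarrow> \<phi> s \<le> \<phi> r"
begin

abbreviation "\<Omega> \<equiv> K_law \<Otimes>\<^sub>M rcm_law lam"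

abbreviation "U \<omega> \<equiv> linked_sites p \<phi> R B (marked_sites B (fst \<omega>)) (snd \<omega>)"

lemma sets_B [measurable]: "B \<in> sets borel"
  by (subst B) (rule sets_cubify)

lemma measurable_sample_components:
  "(\<lambda>\<omega>. fst (snd \<omega>)) \<in> measurable \<Omega> (count_law lam)"
  "(\<lambda>\<omega>. fst (snd (snd \<omega>))) \<in> measurable \<Omega> pos_law"
  "(\<lambda>\<omega>. snd (snd (snd \<omega>))) \<in> measurable \<Omega> edge_law"
  unfolding rcm_law_def by measurable

lemma pred_mem_marked_sites: "Measurable.pred \<Omega> (\<lambda>\<omega>. z \<in> marked_sites B (fst \<omega>))"
proof (cases "z \<in> halfint \<inter> B")
  case True
  then have "(\<lambda>\<kappa>. \<kappa> z) \<in> measurable (\<Pi>\<^sub>M z\<in>halfint \<inter> B. count_space UNIV) (count_space UNIV)"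
    by (rule measurable_component_singleton)
  then have "(\<lambda>\<kappa>. \<kappa> z) \<in> measurable K_law (count_space UNIV)"
    by (subst measurable_cong_sets[OF K_sets refl])
  then have "(\<lambda>\<omega>. fst \<omega> z) \<in> measurable \<Omega> (count_space UNIV)"
    by (rule measurable_compose[OF measurable_fst])
  then have "Measurable.pred \<Omega> (\<lambda>\<omega>. fst \<omega> z)" by measurable
  moreover have "z \<in> marked_sites B \<kappa> \<longleftrightarrow> \<kappa> z" for \<kappa> using True by (simp add: marked_sites_def)
  ultimately show ?thesis by simp
next
  case False
  then have "z \<notin> marked_sites B \<kappa>" for \<kappa> by (auto simp: marked_sites_def)
  then show ?thesis by simp
qed

lemma pred_in_cubify_marked:
  "Measurable.pred \<Omega> (\<lambda>\<omega>. fst (snd (snd \<omega>)) a \<in> cubify (marked_sites B (fst \<omega>)))"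
  unfolding mem_cubify_marked_sites unit_cube_def
  using pred_mem_marked_sites borel_measurable_position[OF measurable_sample_components] by measurable

lemma pred_conn_in_marked:
  assumes "S \<in> sets borel" "A \<in> sets borel"
  shows "Measurable.pred \<Omega> (\<lambda>\<omega>. conn_in p \<phi> (snd \<omega>) S A (cubify (marked_sites B (fst \<omega>))))"
  using pred_conn_in[OF measurable_sample_components p1 phi_mono assms pred_in_cubify_marked]
  by simp

lemma pred_mem_U: "Measurable.pred \<Omega> (\<lambda>\<omega>. z \<in> U \<omega>)"
proof (cases "z \<in> Delta R B")
  case True
  have "Measurable.pred \<Omega> (\<lambda>\<omega>. conn_in p \<phi> (snd \<omega>) (B - cubify R) (cubify {z}) (cubify (marked_sites B (fst \<omega>))))"
    by (rule pred_conn_in_marked) measurable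
  with True show ?thesis by (simp add: linked_sites_def)
qed (simp add: linked_sites_def)

lemma pred_small_U: "Measurable.pred \<Omega> (\<lambda>\<omega>. finite (U \<omega>) \<and> card (U \<omega>) \<le> t)"
  by (intro pred_finite_card_le[OF countable_halfint] pred_mem_U) (auto simp: linked_sites_def Delta_def)

lemma pred_shield_vacant: "Measurable.pred \<Omega> (\<lambda>\<omega>. \<forall>k \<in> shield_cells R (U \<omega>). fst (snd \<omega>) k = 0)"
proof -
  have "Measurable.pred \<Omega> (\<lambda>\<omega>. \<forall>k k'. unit_cube k \<subseteq> cubify R \<longrightarrow> cell_center k' \<in> U \<omega> \<longrightarrow>
      unit_cube k \<inter> unit_cube k' \<noteq> {} \<longrightarrow> fst (snd \<omega>) k = 0)"
    using pred_mem_U measurable_count_coord[OF measurable_sample_components] by measurable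
  then show ?thesis unfolding shield_cells_def by (simp add: imp_ex imp_conjL)
qed

abbreviation "regular \<omega> \<equiv> plusB R B \<inter> cubify (marked_sites B (fst \<omega>)) = {} \<and>
  in_open_cells (fst (snd (snd \<omega>))) \<and> nonneg_on_pairs (snd (snd (snd \<omega>)))"

lemma pred_regular: "Measurable.pred \<Omega> regular"
proof -
  have "plusB R B \<inter> cubify (marked_sites B \<kappa>) = {} \<longleftrightarrow>
      (\<forall>k. cell_center k \<in> marked_sites B \<kappa> \<longrightarrow> unit_cube k \<inter> plusB R B = {})" for \<kappa>
    unfolding disjoint_iff mem_cubify_marked_sites by blast
  moreover have "Measurable.pred \<Omega>
      (\<lambda>\<omega>. \<forall>k. cell_center k \<in> marked_sites B (fst \<omega>) \<longrightarrow> unit_cube k \<inter> plusB R B = {})"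
    using pred_mem_marked_sites by measurable
  moreover have "Measurable.pred \<Omega> (\<lambda>\<omega>. in_open_cells (fst (snd (snd \<omega>))))"
    using measurable_sample_components(2) pred_in_open_cells by (rule measurable_compose)
  moreover have "Measurable.pred \<Omega> (\<lambda>\<omega>. nonneg_on_pairs (snd (snd (snd \<omega>))))"
    using measurable_sample_components(3) pred_nonneg_on_pairs by (rule measurable_compose)
  ultimately show ?thesis by (intro pred_intros_logic(3)) simp_all
qed

lemma AE_regular:
  assumes K_prob: "prob_space K_law"
    and K_sep: "AE \<kappa> in K_law. plusB R B \<inter> cubify {z \<in> halfint \<inter> B. \<kappa> z} = {}"
  shows "AE \<omega> in \<Omega>. regular \<omega>"
proof -
  interpret K: prob_space K_law by (rule K_prob)
  interpret RL: prob_space "rcm_law lam" by (rule prob_space_rcm_law)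
  interpret pair_sigma_finite K_law "rcm_law lam" ..
  show ?thesis
  proof (rule AE_pair_measure)
    show "{\<omega> \<in> space \<Omega>. regular \<omega>} \<in> sets \<Omega>" using pred_regular unfolding pred_def .
    have "AE \<kappa> in K_law. plusB R B \<inter> cubify (marked_sites B \<kappa>) = {}"
      using K_sep by (simp add: marked_sites_def)
    then show "AE \<kappa> in K_law. AE r in rcm_law lam. regular (\<kappa>, r)"
      by eventually_elim (use AE_rcm_law_regular in simp)
  qed
qed

abbreviation "few_links t \<equiv> {\<omega> \<in> space \<Omega>. regular \<omega> \<and> finite (U \<omega>) \<and> card (U \<omega>) \<le> t}"

abbreviation "shielded_few_links t \<equiv> {\<omega> \<in> space \<Omega>. regular \<omega> \<and> finite (U \<omega>) \<and> card (U \<omega>) \<le> t \<and>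
  (\<forall>k \<in> shield_cells R (U \<omega>). fst (snd \<omega>) k = 0)}"

lemma sets_few_links: "few_links t \<in> sets \<Omega>"
  using pred_intros_logic(3)[OF pred_regular pred_small_U] unfolding pred_def .

lemma sets_shielded_few_links: "shielded_few_links t \<in> sets \<Omega>"
  using pred_intros_logic(3)[OF pred_regular pred_intros_logic(3)[OF pred_small_U pred_shield_vacant]]
  unfolding pred_def by (simp add: conj_assoc)

lemma sets_count_section: "X \<in> sets \<Omega> \<Longrightarrow> {n. (\<kappa>, n, w) \<in> X} \<in> sets (count_law lam)"
  unfolding rcm_law_def by (rule sets_Pair_middle)

lemma emeasure_count_section_ge:
  assumes lam: "0 < lam" and \<kappa>: "\<kappa> \<in> space K_law" and yv: "(y, v) \<in> space (pos_law \<Otimes>\<^sub>M edge_law)"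
  shows "ennreal (exp (- lam * real (3 ^ CARD('n) * t))) * emeasure (count_law lam) {n. (\<kappa>, n, y, v) \<in> few_links t}
    \<le> emeasure (count_law lam) {n. (\<kappa>, n, y, v) \<in> shielded_few_links t}"
proof -
  have space: "(\<kappa>, n, y, v) \<in> space \<Omega>" for n
    using \<kappa> yv by (simp add: space_pair_measure rcm_law_def count_law_def space_PiM PiE_UNIV_domain)
  show ?thesis
  proof (cases "regular (\<kappa>, undefined, y, v)")
    case False
    then have "{n. (\<kappa>, n, y, v) \<in> few_links t} = {}" by auto
    then show ?thesis by (simp only: emeasure_empty mult_zero_right zero_le)
  next
    case True
    then have y: "in_open_cells y" by simp
    let ?Q = "\<lambda>n. shield_cells R (U (\<kappa>, n, y, v))"
    let ?A = "{n. (\<kappa>, n, y, v) \<in> few_links t}" and ?D = "{n. (\<kappa>, n, y, v) \<in> shielded_few_links t}"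
    have U_indep: "U (\<kappa>, n, y, v) = U (\<kappa>, n', y, v)"
      if "\<And>k. k \<notin> {k. unit_cube k \<subseteq> cubify R} \<Longrightarrow> n k = n' k" for n n'
      using that by (auto intro!: linked_sites_cong_counts[OF y])
    have "ennreal (exp (- lam * real (3 ^ CARD('n) * t))) *
        emeasure (PiM UNIV (\<lambda>_. measure_pmf (poisson_pmf lam))) ?A
      \<le> emeasure (PiM UNIV (\<lambda>_. measure_pmf (poisson_pmf lam))) ?D"
    proof (rule emeasure_PiM_poisson_vanish_ge[where J = "{k. unit_cube k \<subseteq> cubify R}" and Q = ?Q])
      show "0 < lam" by (rule lam)
      show "?A \<in> sets (PiM UNIV (\<lambda>_. measure_pmf (poisson_pmf lam)))"
        "?D \<in> sets (PiM UNIV (\<lambda>_. measure_pmf (poisson_pmf lam)))"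
        using sets_count_section[OF sets_few_links] sets_count_section[OF sets_shielded_few_links]
        unfolding count_law_def by auto
    next
      fix n n' :: "int^'n \<Rightarrow> nat"
      assume "\<And>k. k \<notin> {k. unit_cube k \<subseteq> cubify R} \<Longrightarrow> n k = n' k"
      from U_indep[OF this] show "n \<in> ?A \<longleftrightarrow> n' \<in> ?A"
        and "?Q n = ?Q n'"
        using space True by simp_all
    next
      fix n :: "int^'n \<Rightarrow> nat"
      assume "n \<in> ?A"
      moreover have "U (\<kappa>, n, y, v) \<subseteq> halfint" by (auto simp: linked_sites_def Delta_def)
      ultimately show "finite (?Q n) \<and> ?Q n \<subseteq> {k. unit_cube k \<subseteq> cubify R} \<and> card (?Q n) \<le> 3 ^ CARD('n) * t"
        by (intro finite_card_shield_cells) simp_all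
    next
      fix n :: "int^'n \<Rightarrow> nat"
      show "n \<in> ?D \<longleftrightarrow> n \<in> ?A \<and> (\<forall>k\<in>?Q n. n k = 0)" by auto
    qed
    then show ?thesis unfolding count_law_def .
  qed
qed

lemma emeasure_few_links_le:
  assumes lam: "0 < lam" and K_prob: "prob_space K_law"
  shows "ennreal (exp (- lam * real (3 ^ CARD('n) * t))) * emeasure \<Omega> (few_links t)
    \<le> emeasure \<Omega> (shielded_few_links t)"
proof -
  have sections: "ennreal (exp (- lam * real (3 ^ CARD('n) * t))) *
      emeasure (count_law lam) {n. (\<kappa>, n, w) \<in> few_links t}
      \<le> emeasure (count_law lam) {n. (\<kappa>, n, w) \<in> shielded_few_links t}"
    if "\<kappa> \<in> space K_law" "w \<in> space (pos_law \<Otimes>\<^sub>M edge_law)" for \<kappa> w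
  proof -
    obtain y v where w: "w = (y, v)" by (cases w)
    from emeasure_count_section_ge[OF lam that(1) that(2)[unfolded w]] show ?thesis unfolding w .
  qed
  have sigma_finite: "sigma_finite_measure K_law" "sigma_finite_measure (count_law lam)"
    "sigma_finite_measure (pos_law \<Otimes>\<^sub>M edge_law)"
    by (simp_all add: prob_space_imp_sigma_finite K_prob prob_space_count_law prob_space_pair
        prob_space_pos_law prob_space_edge_law)
  show ?thesis
    unfolding rcm_law_def
    by (rule emeasure_pair_measure_mono_middle[OF sigma_finite sets_few_links[unfolded rcm_law_def]
          sets_shielded_few_links[unfolded rcm_law_def] sections[unfolded rcm_law_def]])
qed

lemma measure_few_links_le:
  assumes lam: "0 < lam" and K_prob: "prob_space K_law"
    and K_sep: "AE \<kappa> in K_law. plusB R B \<inter> cubify {z \<in> halfint \<inter> B. \<kappa> z} = {}"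
    and phi_sup: "{r. r > 0 \<and> \<phi> r > 0} \<noteq> {} \<and> bdd_above {r. r > 0 \<and> \<phi> r > 0}
                  \<and> Sup {r. r > 0 \<and> \<phi> r > 0} = 1"
  shows "measure \<Omega> {\<omega> \<in> space \<Omega>. finite (U \<omega>) \<and> card (U \<omega>) \<le> t}
    \<le> exp (3 ^ CARD('n) * lam * real t) * measure \<Omega>
         {\<omega> \<in> space \<Omega>. \<not> conn_in p \<phi> (snd \<omega>) B (cubify R) (cubify (marked_sites B (fst \<omega>)))}"
    (is "measure \<Omega> ?small \<le> exp ?a * measure \<Omega> ?blocked")
proof -
  interpret K: prob_space K_law by (rule K_prob)
  interpret RL: prob_space "rcm_law lam" by (rule prob_space_rcm_law)
  interpret prob_space \<Omega> by (intro prob_space_pair K_prob prob_space_rcm_law)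
  have small_eq: "measure \<Omega> ?small = measure \<Omega> (few_links t)"
    using AE_regular[OF K_prob K_sep] pred_small_U[unfolded pred_def] sets_few_links
    by (intro measure_eq_AE) auto
  have "exp (- ?a) = exp (- lam * real (3 ^ CARD('n) * t))" by simp
  then have bound: "ennreal (exp (- ?a)) * emeasure \<Omega> (few_links t) \<le> emeasure \<Omega> (shielded_few_links t)"
    using emeasure_few_links_le[OF lam K_prob] by (simp only:)
  have blocked: "shielded_few_links t \<subseteq> ?blocked"
  proof
    fix \<omega> assume "\<omega> \<in> shielded_few_links t"
    moreover obtain \<kappa> n y v where "\<omega> = (\<kappa>, n, y, v)" by (cases \<omega>)
    ultimately show "\<omega> \<in> ?blocked" using not_conn_if_shield_vacant[OF phi_sup p1 B] by auto
  qed
  have "?blocked \<in> sets \<Omega>"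
    using pred_intros_logic(2)[OF pred_conn_in_marked] by (simp add: pred_def)
  with bound blocked show ?thesis unfolding small_eq by (rule measure_le_exp_mult_measure)
qed

end

theorem lemma2p3:
  fixes p :: ereal and \<phi> :: "real \<Rightarrow> real" and lam :: real
    and R B :: "(real^'n) set" and K_law :: "(real^'n \<Rightarrow> bool) measure" and t :: nat
  assumes d3: "CARD('n) \<ge> 3"
    and p1: "1 \<le> p"
    and phi_range: "\<forall>r\<ge>0. 0 \<le> \<phi> r \<and> \<phi> r \<le> 1"
    and phi_mono: "\<forall>r s. 0 \<le> r \<longrightarrow> r \<le> s \<longrightarrow> \<phi> s \<le> \<phi> r"
    and phi_sup: "{r. r > 0 \<and> \<phi> r > 0} \<noteq> {} \<and> bdd_above {r. r > 0 \<and> \<phi> r > 0}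
                  \<and> Sup {r. r > 0 \<and> \<phi> r > 0} = 1"
    and lam: "lam > 0"
    and B: "B = cubify (B \<inter> halfint)"
    and K_prob: "prob_space K_law"
    and K_sets: "sets K_law = sets (\<Pi>\<^sub>M z\<in>halfint \<inter> B. count_space (UNIV :: bool set))"
    and K_sep: "AE \<kappa> in K_law. plusB R B \<inter> cubify {z \<in> halfint \<inter> B. \<kappa> z} = {}"
  shows "measure (K_law \<Otimes>\<^sub>M rcm_law lam)
           {\<omega> \<in> space (K_law \<Otimes>\<^sub>M rcm_law lam).
              (let K = {z \<in> halfint \<inter> B. fst \<omega> z};
                   U = {z \<in> Delta R B. conn_in p \<phi> (snd \<omega>) (B - cubify R) (cubify {z}) (cubify K)}
               in finite U \<and> card U \<le> t)}
         \<le> exp (3 ^ CARD('n) * lam * real t) *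
           measure (K_law \<Otimes>\<^sub>M rcm_law lam)
           {\<omega> \<in> space (K_law \<Otimes>\<^sub>M rcm_law lam).
              \<not> conn_in p \<phi> (snd \<omega>) B (cubify R) (cubify {z \<in> halfint \<inter> B. fst \<omega> z})}"
  using measure_few_links_le[OF K_sets B p1 phi_mono lam K_prob K_sep phi_sup, of t]
  by (simp add: Let_def linked_sites_def marked_sites_def)

end
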